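(* Let $x\in J$ with $\|x\|_J=1$. (1) If $x$ is an extreme point of $B_J$, then $\|x|_I\|_J=\|x|_I\|_2$ for every interval $I$ of $\mathbb N$. (2) If $\{I_i\}_{i\in F}$ is an $x$-norming family and $b_i=\sum_{n\in I_i}x(n)$ for $i\in F$, then $\sum_{i\in F}b_ie_{k_i}$ is an extreme point of $B_J$ for every strictly increasing sequence $(k_i)_{i\in F}$ in $\mathbb N$.
   Context: For a real sequence $x=(x(n))_{n\in\mathbb N}$ let $\|x\|_J=\sup\bigl(\sum_{i=1}^n|\sum_{k\in I_i}x(k)|^2\bigr)^{1/2}$ over all $n$ and all families of pairwise disjoint intervals $I_1,\dots,I_n$ of $\mathbb N$ (intervals: nonempty sets of consecutive positive integers, possibly infinite). $J=\{x:\|x\|_J<\infty\}$ with unit vector basis $(e_n)$ and closed unit ball $B_J$; $\|\cdot\|_2$ is the $\ell_2$ norm; for $x\in J$ and any interval $I$ the series $\sum_{k\in I}x(k)$ converges. For $A\subset\mathbb N$, $x|_A$ equals $x$ on $A$ and $0$ off $A$. A family of intervals $\mathcal I=\{I_i\}_{i\in F}$: $F=\{1,\dots,k\}$ or $F=\mathbb N$, each $I_i$ an interval, $\max I_i<\min I_{i+1}$ whenever $i+1\in F$; it is $x$-norming if $(\sum_{i\in F}|\sum_{k\in I_i}x(k)|^2)^{1/2}=\|x\|_J$. *)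

theory Defs
  imports "HOL-Analysis.Analysis"
begin

text \<open>Sequences are functions nat => real; the paper's index set of positive integers
is re-indexed to start at 0 (harmless shift).\<close>

definition is_interval_nat :: "nat set \<Rightarrow> bool" where
  "is_interval_nat I \<longleftrightarrow> I \<noteq> {} \<and> (\<forall>a\<in>I. \<forall>c\<in>I. \<forall>b. a \<le> b \<and> b \<le> c \<longrightarrow> b \<in> I)"

definition interval_sum :: "(nat \<Rightarrow> real) \<Rightarrow> nat set \<Rightarrow> real" where
  "interval_sum x I = (if finite I then sum x I else lim (\<lambda>n. sum x (I \<inter> {..n})))"

text \<open>The James norm (extended-real valued: infinite when x is not in J).\<close>
definition Jnorm_e :: "(nat \<Rightarrow> real) \<Rightarrow> ereal" where
  "Jnorm_e x = (SUP \<I> \<in> {\<I>. finite \<I> \<and> (\<forall>I\<in>\<I>. is_interval_nat I) \<and> disjoint \<I>}.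
                  ereal (sqrt (\<Sum>I\<in>\<I>. (interval_sum x I)\<^sup>2)))"

definition Jspace :: "(nat \<Rightarrow> real) set" where
  "Jspace = {x. Jnorm_e x < \<infinity>}"

definition Jnorm :: "(nat \<Rightarrow> real) \<Rightarrow> real" where
  "Jnorm x = real_of_ereal (Jnorm_e x)"

definition J_ball :: "(nat \<Rightarrow> real) set" where
  "J_ball = {x \<in> Jspace. Jnorm x \<le> 1}"

definition l2norm :: "(nat \<Rightarrow> real) \<Rightarrow> real" where
  "l2norm x = sqrt (\<Sum>k. (x k)\<^sup>2)"

definition restrict_seq :: "(nat \<Rightarrow> real) \<Rightarrow> nat set \<Rightarrow> (nat \<Rightarrow> real)" where
  "restrict_seq x A = (\<lambda>k. if k \<in> A then x k else 0)"

definition interval_family :: "nat set \<Rightarrow> (nat \<Rightarrow> nat set) \<Rightarrow> bool" where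
  "interval_family F \<I> \<longleftrightarrow>
     (F = UNIV \<or> (\<exists>m\<ge>1. F = {..<m})) \<and>
     (\<forall>i\<in>F. is_interval_nat (\<I> i)) \<and>
     (\<forall>i. i \<in> F \<and> Suc i \<in> F \<longrightarrow> (\<forall>a\<in>\<I> i. \<forall>b\<in>\<I> (Suc i). a < b))"

definition norming_family :: "(nat \<Rightarrow> real) \<Rightarrow> nat set \<Rightarrow> (nat \<Rightarrow> nat set) \<Rightarrow> bool" where
  "norming_family x F \<I> \<longleftrightarrow> interval_family F \<I> \<and>
     sqrt (infsum (\<lambda>i. (interval_sum x (\<I> i))\<^sup>2) F) = Jnorm x"

text \<open>The vector sum over i in F of b i times e (k i).\<close>
definition spread_seq :: "nat set \<Rightarrow> (nat \<Rightarrow> nat) \<Rightarrow> (nat \<Rightarrow> real) \<Rightarrow> (nat \<Rightarrow> real)" where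
  "spread_seq F k b = (\<lambda>n. if n \<in> k ` F then b (inv_into F k n) else 0)"

text \<open>Extreme point of a set of sequences (nat => real carries no real_vector instance,
  so the library notion is written out pointwise: x is in S and x does not lie in the
  open segment between two distinct points of S).\<close>
definition seq_extreme_point :: "(nat \<Rightarrow> real) \<Rightarrow> (nat \<Rightarrow> real) set \<Rightarrow> bool" where
  "seq_extreme_point x S \<longleftrightarrow> x \<in> S \<and>
     (\<forall>a\<in>S. \<forall>b\<in>S. a \<noteq> b \<longrightarrow>
        \<not> (\<exists>u::real. 0 < u \<and> u < 1 \<and> x = (\<lambda>n. (1 - u) * a n + u * b n)))"

end

theory Submission
  imports Defs
begin

(*
  Write S n = x 0 + ... + x (n - 1). The James norm of x is the supremum, over finite increasing
  chains c_0 < ... < c_r, of the quadratic variation sum_j (S c_(j+1) - S c_j)^2 of S along the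
  chain, the limit of S standing in for an infinite last interval.

  (1) Let x be an extreme point of norm 1. If every chain through some index n >= 1 had variation
  at most 1 - e, then x +- (e/10)(e_(n-1) - e_n), which move only S n, would both lie in B_J and x
  would be their midpoint; so every index lies on chains of variation arbitrarily close to 1.
  A four-point exchange argument then shows, by induction on the last point, that refining a chain
  to all intermediate indices never decreases its variation, so the variation of a chain from a to
  b is at most sum_(a <= k < b) x k ^ 2. For the partial sums of x|I this bounds the J-norm of x|I
  by its l2-norm, and the reverse inequality holds for every vector.

  (2) As the family is norming, x sums to zero over every interval meeting no I_i. Hence the partial
  sums of y = sum b_i e_(k_i) are partial sums of x at the left ends of the I_i (or the full sum of
  x) along a monotone reparametrisation, and ||y||_J <= ||x||_J = 1. Moreover ||y||_2^2 =
  sum b_i^2 = 1, and by strict convexity of the l2-norm every point of B_J of l2-norm 1 is extreme.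
*)

section \<open>Quadratic variation along chains\<close>

definition partial_sum :: "(nat \<Rightarrow> real) \<Rightarrow> nat \<Rightarrow> real" where
  "partial_sum x n = (\<Sum>k<n. x k)"

lemma partial_sum_0 [simp]: "partial_sum x 0 = 0"
  by (simp add: partial_sum_def)

lemma partial_sum_Suc: "partial_sum x (Suc n) = partial_sum x n + x n"
  by (simp add: partial_sum_def)

lemma sum_atLeastLessThan_eq_partial_sum_diff:
  "a \<le> b \<Longrightarrow> sum x {a..<b} = partial_sum x b - partial_sum x a"
  unfolding partial_sum_def using sum_diff_nat_ivl[of 0 a b x] by (simp add: atLeast0LessThan)

fun quad_var :: "(nat \<Rightarrow> real) \<Rightarrow> nat list \<Rightarrow> real" where
  "quad_var P (a # b # r) = (P b - P a)\<^sup>2 + quad_var P (b # r)"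
| "quad_var P _ = 0"

lemma quad_var_nonneg: "0 \<le> quad_var P c"
  by (induction P c rule: quad_var.induct) auto

lemma quad_var_append:
  "xs \<noteq> [] \<Longrightarrow> quad_var P (xs @ ys) = quad_var P xs + quad_var P (last xs # ys)"
  by (induction xs rule: induct_list012) auto

lemma quad_var_snoc:
  "xs \<noteq> [] \<Longrightarrow> quad_var P (xs @ [a]) = quad_var P xs + (P a - P (last xs))\<^sup>2"
  by (simp add: quad_var_append)

lemma quad_var_append_Cons:
  "quad_var P (l @ m # r) = quad_var P (l @ [m]) + quad_var P (m # r)"
  by (cases "l = []") (simp_all add: quad_var_append)

lemma quad_var_cong: "(\<And>z. z \<in> set c \<Longrightarrow> P z = Q z) \<Longrightarrow> quad_var P c = quad_var Q c"
  by (induction P c rule: quad_var.induct) auto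

lemma quad_var_map: "quad_var P (map f c) = quad_var (P \<circ> f) c"
  by (induction "P \<circ> f" c rule: quad_var.induct) auto

lemma quad_var_add_const: "quad_var (\<lambda>j. P j + C) c = quad_var P c"
  by (induction P c rule: quad_var.induct) auto

lemma quad_var_le_Cons: "quad_var P c \<le> quad_var P (a # c)"
  by (cases c) auto

lemma quad_var_remdups_adj: "quad_var P (remdups_adj c) = quad_var P c"
proof (induction c rule: remdups_adj.induct)
  case (3 x y xs)
  have "remdups_adj (y # xs) = y # tl (remdups_adj (y # xs))"
    by simp
  then have "quad_var P (x # remdups_adj (y # xs)) = (P y - P x)\<^sup>2 + quad_var P (remdups_adj (y # xs))"
    by (metis quad_var.simps(1))
  with 3 show ?case
    by (cases "x = y") simp_all
qed auto

lemma quad_var_tendsto: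
  "(\<And>z. z \<in> set c \<Longrightarrow> (\<lambda>N. P N z) \<longlonglongrightarrow> Q z) \<Longrightarrow> (\<lambda>N. quad_var (P N) c) \<longlonglongrightarrow> quad_var Q c"
proof (induction c rule: induct_list012)
  case (3 a b r)
  then have "(\<lambda>N. (P N b - P N a)\<^sup>2 + quad_var (P N) (b # r)) \<longlonglongrightarrow> (Q b - Q a)\<^sup>2 + quad_var Q (b # r)"
    by (intro tendsto_intros) auto
  then show ?case
    by simp
qed auto

lemma sorted_wrt_less_remdups_adj: "sorted c \<Longrightarrow> sorted_wrt (<) (remdups_adj c)"
proof (induction c rule: remdups_adj.induct)
  case (3 x y xs)
  then show ?case
    by (cases "x = y") (auto simp: order.strict_iff_order)
qed auto

lemma sorted_wrt_less_append_Cons: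
  "sorted_wrt (<) l \<Longrightarrow> \<forall>z\<in>set l. z < (m::nat) \<Longrightarrow> sorted_wrt (<) (m # r) \<Longrightarrow> sorted_wrt (<) (l @ m # r)"
  by (auto simp: sorted_wrt_append intro: less_trans)

lemma sorted_le_last: "sorted (c::nat list) \<Longrightarrow> z \<in> set c \<Longrightarrow> z \<le> last c"
  by (induction c rule: rev_induct) (auto simp: sorted_append)

lemma quad_var_partial_sum_upt:
  "a \<le> b \<Longrightarrow> quad_var (partial_sum x) [a..<Suc b] = (\<Sum>k\<in>{a..<b}. (x k)\<^sup>2)"
proof (induction b)
  case (Suc b)
  show ?case
  proof (cases "a = Suc b")
    case False
    then have "a \<le> b"
      using Suc.prems by simp
    have "[a..<Suc (Suc b)] = [a..<Suc b] @ [Suc b]"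
      using Suc.prems by simp
    then show ?thesis
      using Suc.IH \<open>a \<le> b\<close> by (simp add: quad_var_snoc partial_sum_Suc del: upt_Suc)
  qed simp
qed simp

lemma convergent_comp_mono:
  fixes f :: "nat \<Rightarrow> 'a::topological_space" and g :: "nat \<Rightarrow> nat"
  assumes "convergent f" "mono g"
  shows "convergent (f \<circ> g)"
proof (cases "bdd_above (range g)")
  case True
  then have fin: "finite (range g)"
    by (simp add: bdd_above_nat)
  then have "Max (range g) \<in> range g"
    by simp
  then obtain N where N: "g N = Max (range g)"
    by (metis rangeE)
  have "g j = Max (range g)" if "N \<le> j" for j
    using monoD[OF \<open>mono g\<close> that] Max_ge[OF fin rangeI[of g j]] N by simp
  then have "\<forall>\<^sub>F j in sequentially. (f \<circ> g) j = f (Max (range g))"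
    by (intro eventually_sequentiallyI[of N]) simp
  then have "(f \<circ> g) \<longlonglongrightarrow> f (Max (range g))"
    by (rule tendsto_eventually)
  then show ?thesis
    by (rule convergentI)
next
  case False
  have "\<forall>\<^sub>F j in sequentially. B \<le> g j" for B
  proof -
    obtain N where "B < g N"
      using False by (meson bdd_above.I2 not_le)
    then have "B \<le> g j" if "N \<le> j" for j
      using monoD[OF \<open>mono g\<close> that] by simp
    then show ?thesis
      by (rule eventually_sequentiallyI)
  qed
  then have "filterlim g at_top sequentially"
    by (simp add: filterlim_at_top)
  moreover obtain L where "f \<longlonglongrightarrow> L"
    using assms(1) by (auto simp: convergent_def)
  ultimately have "(f \<circ> g) \<longlonglongrightarrow> L"
    unfolding comp_def by (rule filterlim_compose[rotated])
  then show ?thesis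
    by (rule convergentI)
qed

section \<open>The James norm as a supremum of chain variations\<close>

definition interval_families :: "nat set set set" where
  "interval_families = {\<I>. finite \<I> \<and> (\<forall>I\<in>\<I>. is_interval_nat I) \<and> disjoint \<I>}"

definition family_sqsum :: "(nat \<Rightarrow> real) \<Rightarrow> nat set set \<Rightarrow> real" where
  "family_sqsum x \<I> = (\<Sum>I\<in>\<I>. (interval_sum x I)\<^sup>2)"

lemma Jnorm_e_eq_SUP: "Jnorm_e x = (SUP \<I>\<in>interval_families. ereal (sqrt (family_sqsum x \<I>)))"
  unfolding Jnorm_e_def interval_families_def family_sqsum_def by simp

lemma family_sqsum_nonneg: "0 \<le> family_sqsum x \<I>"
  unfolding family_sqsum_def by (simp add: sum_nonneg)

lemma empty_in_interval_families: "{} \<in> interval_families"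
  by (simp add: interval_families_def)

lemma interval_families_insert:
  assumes "\<I> \<in> interval_families" "is_interval_nat J" "\<forall>I\<in>\<I>. I \<inter> J = {}"
  shows "insert J \<I> \<in> interval_families"
  using assms unfolding interval_families_def by (auto simp: pairwise_insert disjnt_def Int_commute)

lemma interval_families_subset:
  assumes "\<I> \<in> interval_families" "\<J> \<subseteq> \<I>"
  shows "\<J> \<in> interval_families"
  using assms pairwise_subset[of disjnt \<I> \<J>] finite_subset[of \<J> \<I>]
  unfolding interval_families_def by blast

lemma family_sqsum_le_Jnorm_e: "\<I> \<in> interval_families \<Longrightarrow> ereal (sqrt (family_sqsum x \<I>)) \<le> Jnorm_e x"
  unfolding Jnorm_e_eq_SUP by (rule SUP_upper)

lemma Jnorm_e_nonneg: "0 \<le> Jnorm_e x"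
  using family_sqsum_le_Jnorm_e[OF empty_in_interval_families, of x]
  by (simp add: family_sqsum_def zero_ereal_def)

lemma Jnorm_e_eq_Jnorm: "x \<in> Jspace \<Longrightarrow> Jnorm_e x = ereal (Jnorm x)"
  unfolding Jspace_def Jnorm_def using Jnorm_e_nonneg[of x] by (cases "Jnorm_e x") auto

lemma Jnorm_nonneg: "0 \<le> Jnorm x"
  unfolding Jnorm_def using Jnorm_e_nonneg[of x] by (cases "Jnorm_e x") auto

lemma family_sqsum_le_Jnorm_sq:
  assumes "x \<in> Jspace" "\<I> \<in> interval_families"
  shows "family_sqsum x \<I> \<le> (Jnorm x)\<^sup>2"
proof -
  have "sqrt (family_sqsum x \<I>) \<le> Jnorm x"
    using family_sqsum_le_Jnorm_e[OF assms(2), of x] Jnorm_e_eq_Jnorm[OF assms(1)] by simp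
  then show ?thesis
    using family_sqsum_nonneg[of x \<I>] Jnorm_nonneg[of x] by (metis real_le_lsqrt real_sqrt_ge_zero sqrt_le_D)
qed

lemma Jnorm_le_if_family_sqsum_le:
  assumes "\<And>\<I>. \<I> \<in> interval_families \<Longrightarrow> family_sqsum x \<I> \<le> M" "0 \<le> M"
  shows "x \<in> Jspace" "Jnorm x \<le> sqrt M"
proof -
  have "Jnorm_e x \<le> ereal (sqrt M)"
    unfolding Jnorm_e_eq_SUP by (rule SUP_least) (use assms in \<open>simp add: real_sqrt_le_iff\<close>)
  then show "x \<in> Jspace"
    unfolding Jspace_def by auto
  then show "Jnorm x \<le> sqrt M"
    using \<open>Jnorm_e x \<le> ereal (sqrt M)\<close> Jnorm_e_eq_Jnorm by simp
qed

lemma is_interval_natD: "is_interval_nat I \<Longrightarrow> a \<in> I \<Longrightarrow> c \<in> I \<Longrightarrow> a \<le> b \<Longrightarrow> b \<le> c \<Longrightarrow> b \<in> I"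
  unfolding is_interval_nat_def by blast

lemma is_interval_nat_atLeastLessThan: "a < b \<Longrightarrow> is_interval_nat {a..<b}"
  unfolding is_interval_nat_def by auto

lemma is_interval_nat_atLeast: "is_interval_nat {a..}"
  unfolding is_interval_nat_def by auto

lemma finite_interval_eq_atLeastAtMost:
  assumes "is_interval_nat I" "finite I"
  shows "I = {Min I..Max I}"
proof
  show "I \<subseteq> {Min I..Max I}"
    using assms(2) by auto
  have "I \<noteq> {}"
    using assms(1) by (simp add: is_interval_nat_def)
  then have "Min I \<in> I" "Max I \<in> I"
    using assms(2) by simp_all
  then show "{Min I..Max I} \<subseteq> I"
    using is_interval_natD[OF assms(1)] by (meson atLeastAtMost_iff subsetI)
qed

lemma infinite_interval_eq_atLeast:
  assumes "is_interval_nat I" "infinite I"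
  shows "I = {(LEAST z. z \<in> I)..}"
proof
  have least: "(LEAST z. z \<in> I) \<in> I"
    using assms unfolding is_interval_nat_def by (auto intro: LeastI)
  show "{(LEAST z. z \<in> I)..} \<subseteq> I"
  proof
    fix z assume z: "z \<in> {(LEAST z. z \<in> I)..}"
    obtain w where w: "w \<in> I" "z < w"
      using assms(2) unfolding infinite_nat_iff_unbounded by blast
    show "z \<in> I"
      using z w(2) by (intro is_interval_natD[OF assms(1) least w(1)]) auto
  qed
qed (auto intro: Least_le)

lemma interval_sum_atLeastLessThan:
  "a \<le> b \<Longrightarrow> interval_sum x {a..<b} = partial_sum x b - partial_sum x a"
  unfolding interval_sum_def by (simp add: sum_atLeastLessThan_eq_partial_sum_diff)

lemma interval_sum_atLeast:
  assumes "partial_sum x \<longlonglongrightarrow> L"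
  shows "interval_sum x {a..} = L - partial_sum x a"
proof -
  have "(\<lambda>n. partial_sum x (Suc n) - partial_sum x a) \<longlonglongrightarrow> L - partial_sum x a"
    by (intro tendsto_intros LIMSEQ_Suc assms)
  moreover have "\<forall>\<^sub>F n in sequentially. partial_sum x (Suc n) - partial_sum x a = sum x ({a..} \<inter> {..n})"
  proof (rule eventually_sequentiallyI)
    fix n assume "a \<le> n"
    then have "{a..} \<inter> {..n} = {a..<Suc n}"
      by auto
    then show "partial_sum x (Suc n) - partial_sum x a = sum x ({a..} \<inter> {..n})"
      using \<open>a \<le> n\<close> sum_atLeastLessThan_eq_partial_sum_diff[of a "Suc n" x] by simp
  qed
  ultimately have "(\<lambda>n. sum x ({a..} \<inter> {..n})) \<longlonglongrightarrow> L - partial_sum x a"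
    by (rule Lim_transform_eventually)
  moreover have "infinite {a..}"
    by (simp add: infinite_Ici)
  ultimately show ?thesis
    unfolding interval_sum_def by (simp add: limI)
qed

lemma sorted_chain_interval_family:
  "sorted c \<Longrightarrow> \<exists>\<I>\<in>interval_families.
     family_sqsum x \<I> = quad_var (partial_sum x) c \<and> (\<forall>I\<in>\<I>. \<forall>z\<in>I. hd c \<le> z)"
proof (induction c rule: induct_list012)
  case (3 a b r)
  then obtain \<I> where \<I>: "\<I> \<in> interval_families" "family_sqsum x \<I> = quad_var (partial_sum x) (b # r)"
      "\<forall>I\<in>\<I>. \<forall>z\<in>I. b \<le> z"
    by auto
  show ?case
  proof (cases "a = b")
    case True
    then show ?thesis
      using \<I> by auto
  next
    case False
    with "3.prems" have "a < b"
      by simp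
    let ?\<J> = "insert {a..<b} \<I>"
    have "{a..<b} \<notin> \<I>"
      using \<I>(3) \<open>a < b\<close> by fastforce
    moreover have "\<forall>I\<in>\<I>. I \<inter> {a..<b} = {}"
      using \<I>(3) by fastforce
    then have "?\<J> \<in> interval_families"
      using \<I>(1) \<open>a < b\<close> by (intro interval_families_insert is_interval_nat_atLeastLessThan)
    moreover have "\<forall>I\<in>?\<J>. \<forall>z\<in>I. hd (a # b # r) \<le> z"
      using \<I>(3) \<open>a < b\<close> by fastforce
    moreover have "family_sqsum x ?\<J> = quad_var (partial_sum x) (a # b # r)"
      using \<I>(1,2) \<open>{a..<b} \<notin> \<I>\<close> \<open>a < b\<close>
      by (simp add: family_sqsum_def interval_families_def interval_sum_atLeastLessThan)
    ultimately show ?thesis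
      by blast
  qed
next
  case 1
  show ?case
    using empty_in_interval_families by (intro bexI[of _ "{}"]) (simp_all add: family_sqsum_def)
next
  case (2 a)
  show ?case
    using empty_in_interval_families by (intro bexI[of _ "{}"]) (simp_all add: family_sqsum_def)
qed

lemma quad_var_le_Jnorm_sq: "x \<in> Jspace \<Longrightarrow> sorted c \<Longrightarrow> quad_var (partial_sum x) c \<le> (Jnorm x)\<^sup>2"
  using sorted_chain_interval_family[of c x] family_sqsum_le_Jnorm_sq by force

lemma finite_interval_family_top:
  assumes "\<I> \<in> interval_families" "\<forall>I\<in>\<I>. finite I" "\<I> \<noteq> {}"
  obtains lo hi where "{lo..hi} \<in> \<I>" "lo \<le> hi" "\<forall>J\<in>\<I> - {{lo..hi}}. J \<subseteq> {..<lo}"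
proof -
  have fin: "finite \<I>"
    using assms(1) by (simp add: interval_families_def)
  have "Max (Max ` \<I>) \<in> Max ` \<I>"
    using fin assms(3) by simp
  then obtain I0 where "I0 \<in> \<I>" "Max I0 = Max (Max ` \<I>)"
    by auto
  with fin have I0: "I0 \<in> \<I>" "\<forall>J\<in>\<I>. Max J \<le> Max I0"
    by simp_all
  define lo hi where "lo = Min I0" and "hi = Max I0"
  have iv: "is_interval_nat I0"
    using assms(1) I0(1) by (simp add: interval_families_def)
  have I0_eq: "I0 = {lo..hi}"
    unfolding lo_def hi_def using assms(2) I0(1) by (intro finite_interval_eq_atLeastAtMost[OF iv]) simp
  have "lo \<le> hi"
    using iv by (simp add: I0_eq is_interval_nat_def)
  have "J \<subseteq> {..<lo}" if J: "J \<in> \<I> - {I0}" for J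
  proof
    fix z assume "z \<in> J"
    have "disjnt J I0"
      using assms(1) J I0(1) unfolding interval_families_def by (auto simp: pairwise_def)
    moreover have "z \<le> hi"
      using I0(2) J \<open>z \<in> J\<close> assms(2) unfolding hi_def by (meson DiffD1 Max_ge le_trans)
    ultimately show "z \<in> {..<lo}"
      using \<open>z \<in> J\<close> I0_eq by (auto simp: disjnt_def)
  qed
  with that I0(1) I0_eq \<open>lo \<le> hi\<close> show ?thesis
    by blast
qed

lemma finite_family_sqsum_le_quad_var:
  "\<I> \<in> interval_families \<Longrightarrow> \<forall>I\<in>\<I>. finite I \<and> I \<subseteq> {..<B} \<Longrightarrow>
   \<exists>c. sorted c \<and> set c \<subseteq> {..B} \<and> family_sqsum x \<I> \<le> quad_var (partial_sum x) c"
proof (induction "card \<I>" arbitrary: \<I> B rule: less_induct)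
  case less
  show ?case
  proof (cases "\<I> = {}")
    case False
    then obtain lo hi where top: "{lo..hi} \<in> \<I>" "lo \<le> hi" "\<forall>J\<in>\<I> - {{lo..hi}}. J \<subseteq> {..<lo}"
      using finite_interval_family_top less.prems by blast
    let ?\<R> = "\<I> - {{lo..hi}}"
    have fin: "finite \<I>"
      using less.prems(1) by (simp add: interval_families_def)
    have "card ?\<R> < card \<I>"
      using fin top(1) by (rule card_Diff1_less)
    moreover have "?\<R> \<in> interval_families"
      using less.prems(1) by (rule interval_families_subset) blast
    moreover have "\<forall>J\<in>?\<R>. finite J \<and> J \<subseteq> {..<lo}"
      using less.prems(2) top(3) by blast
    ultimately obtain c where c: "sorted c" "set c \<subseteq> {..lo}" "family_sqsum x ?\<R> \<le> quad_var (partial_sum x) c"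
      using less.hyps by blast
    have "hi \<in> {lo..hi}"
      using top(2) by simp
    then have "hi < B"
      using less.prems(2) top(1) by blast
    have "family_sqsum x \<I> = (partial_sum x (Suc hi) - partial_sum x lo)\<^sup>2 + family_sqsum x ?\<R>"
      using fin top(1,2) interval_sum_atLeastLessThan[of lo "Suc hi" x]
      by (simp add: family_sqsum_def sum.remove atLeastLessThanSuc_atLeastAtMost[symmetric])
    also have "\<dots> \<le> quad_var (partial_sum x) (c @ [lo, Suc hi])"
      using c(3) by (cases "c = []") (auto simp: quad_var_append intro!: add_increasing2)
    finally have "family_sqsum x \<I> \<le> quad_var (partial_sum x) (c @ [lo, Suc hi])" .
    moreover have "sorted (c @ [lo, Suc hi])"
      using c(1,2) top(2) by (auto simp: sorted_append)
    moreover have "set (c @ [lo, Suc hi]) \<subseteq> {..B}"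
      using c(2) \<open>hi < B\<close> top(2) by auto
    ultimately show ?thesis
      by blast
  qed (intro exI[of _ "[]"], simp add: family_sqsum_def)
qed

lemma infinite_interval_in_family:
  assumes "\<I> \<in> interval_families" "I \<in> \<I>" "infinite I"
  obtains a where "I = {a..}" "\<forall>J\<in>\<I> - {I}. J \<subseteq> {..<a}"
proof -
  have "is_interval_nat I"
    using assms(1,2) by (simp add: interval_families_def)
  then have I_eq: "I = {(LEAST z. z \<in> I)..}"
    using infinite_interval_eq_atLeast assms(3) by simp
  have "J \<subseteq> {..<(LEAST z. z \<in> I)}" if "J \<in> \<I> - {I}" for J
  proof -
    have "disjnt J I"
      using assms(1,2) that unfolding interval_families_def by (auto simp: pairwise_def)
    then show ?thesis
      using I_eq by (auto simp: disjnt_def)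
  qed
  then show ?thesis
    by (intro that[OF I_eq]) blast
qed

lemma family_sqsum_le_if_finite_families_le:
  assumes conv: "partial_sum x \<longlonglongrightarrow> L"
    and fin_le: "\<And>\<J>. \<J> \<in> interval_families \<Longrightarrow> \<forall>J\<in>\<J>. finite J \<Longrightarrow> family_sqsum x \<J> \<le> M"
    and \<I>: "\<I> \<in> interval_families"
  shows "family_sqsum x \<I> \<le> M"
proof (cases "\<forall>I\<in>\<I>. finite I")
  case False
  then obtain I1 where I1: "I1 \<in> \<I>" "infinite I1"
    by blast
  then obtain a where I1_eq: "I1 = {a..}" and "\<forall>J\<in>\<I> - {I1}. J \<subseteq> {..<a}"
    using infinite_interval_in_family[OF \<I>] by blast
  let ?\<R> = "\<I> - {I1}"
  have below: "J \<subseteq> {..<a}" if "J \<in> ?\<R>" for J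
    using \<open>\<forall>J\<in>\<I> - {I1}. J \<subseteq> {..<a}\<close> that by blast
  have fin: "finite \<I>"
    using \<I> by (simp add: interval_families_def)
  have truncated: "(partial_sum x N - partial_sum x a)\<^sup>2 + family_sqsum x ?\<R> \<le> M" if "a < N" for N
  proof -
    let ?\<J> = "insert {a..<N} ?\<R>"
    have "{a..<N} \<notin> ?\<R>"
      using below \<open>a < N\<close> by fastforce
    moreover have "?\<J> \<in> interval_families"
      using interval_families_subset[OF \<I>] below \<open>a < N\<close>
      by (intro interval_families_insert is_interval_nat_atLeastLessThan) fastforce+
    moreover have "\<forall>J\<in>?\<J>. finite J"
      using below finite_subset[of _ "{..<a}"] by auto
    ultimately show ?thesis
      using fin_le[of ?\<J>] fin \<open>a < N\<close> by (simp add: family_sqsum_def interval_sum_atLeastLessThan)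
  qed
  have "(\<lambda>N. (partial_sum x N - partial_sum x a)\<^sup>2 + family_sqsum x ?\<R>)
          \<longlonglongrightarrow> (L - partial_sum x a)\<^sup>2 + family_sqsum x ?\<R>"
    by (intro tendsto_intros conv)
  then have "(L - partial_sum x a)\<^sup>2 + family_sqsum x ?\<R> \<le> M"
    by (rule LIMSEQ_le_const2) (use truncated in \<open>auto intro: exI[of _ "Suc a"]\<close>)
  moreover have "family_sqsum x \<I> = (interval_sum x I1)\<^sup>2 + family_sqsum x ?\<R>"
    unfolding family_sqsum_def using fin I1(1) by (simp add: sum.remove)
  ultimately show ?thesis
    using I1_eq interval_sum_atLeast[OF conv] by simp
qed (use fin_le \<I> in blast)

lemma Jnorm_le_if_quad_var_le:
  assumes conv: "convergent (partial_sum x)"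
    and le: "\<And>c. sorted c \<Longrightarrow> quad_var (partial_sum x) c \<le> M" and "0 \<le> M"
  shows "x \<in> Jspace" "Jnorm x \<le> sqrt M"
proof -
  have "family_sqsum x \<J> \<le> M" if "\<J> \<in> interval_families" "\<forall>J\<in>\<J>. finite J" for \<J>
  proof -
    have "finite (\<Union>\<J>)"
      using that by (simp add: interval_families_def)
    then have "\<forall>J\<in>\<J>. finite J \<and> J \<subseteq> {..<Suc (Max (\<Union>\<J>))}"
      using that(2) by (auto intro!: le_imp_less_Suc Max_ge)
    then show ?thesis
      using finite_family_sqsum_le_quad_var[OF that(1)] le by (meson order_trans)
  qed
  moreover obtain L where "partial_sum x \<longlonglongrightarrow> L"
    using conv by (auto simp: convergent_def)
  ultimately show "x \<in> Jspace" "Jnorm x \<le> sqrt M"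
    using Jnorm_le_if_family_sqsum_le family_sqsum_le_if_finite_families_le \<open>0 \<le> M\<close> by blast+
qed

lemma convergent_partial_sum:
  assumes x: "x \<in> Jspace"
  shows "convergent (partial_sum x)"
proof (rule ccontr)
  assume "\<not> convergent (partial_sum x)"
  then obtain e where e: "e > 0" "\<forall>M. \<exists>m\<ge>M. \<exists>n\<ge>M. \<not> dist (partial_sum x m) (partial_sum x n) < e"
    unfolding Cauchy_convergent_iff[symmetric] Cauchy_def by blast
  have "\<exists>c. sorted c \<and> c \<noteq> [] \<and> real K * e\<^sup>2 \<le> quad_var (partial_sum x) c" for K
  proof (induction K)
    case (Suc K)
    then obtain c where c: "sorted c" "c \<noteq> []" "real K * e\<^sup>2 \<le> quad_var (partial_sum x) c"
      by blast
    obtain m n where mn: "last c \<le> m" "last c \<le> n" "\<not> dist (partial_sum x m) (partial_sum x n) < e"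
      using e(2) by blast
    define p q where "p = min m n" and "q = max m n"
    have "e \<le> \<bar>partial_sum x q - partial_sum x p\<bar>"
      using mn(3) unfolding p_def q_def dist_real_def by (cases "m \<le> n") (auto simp: abs_minus_commute)
    then have "e\<^sup>2 \<le> (partial_sum x q - partial_sum x p)\<^sup>2"
      using e(1) by (metis abs_le_square_iff abs_of_pos)
    moreover have "sorted (c @ [p, q])"
      using c(1) mn sorted_le_last[OF c(1)] unfolding p_def q_def by (force simp: sorted_append)
    moreover have "quad_var (partial_sum x) c + (partial_sum x q - partial_sum x p)\<^sup>2
        \<le> quad_var (partial_sum x) (c @ [p, q])"
      using c(2) by (simp add: quad_var_append)
    ultimately show ?case
      using c by (intro exI[of _ "c @ [p, q]"]) (auto simp: algebra_simps)
  qed (auto intro: exI[of _ "[0]"])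
  then have "real K * e\<^sup>2 \<le> (Jnorm x)\<^sup>2" for K
    using quad_var_le_Jnorm_sq[OF x] by (meson order_trans)
  moreover obtain K where "(Jnorm x)\<^sup>2 / e\<^sup>2 < real K"
    using reals_Archimedean2 by blast
  ultimately show False
    using e(1) by (simp add: field_simps) (meson not_le)
qed

lemma abs_partial_sum_le_Jnorm: "x \<in> Jspace \<Longrightarrow> \<bar>partial_sum x j\<bar> \<le> Jnorm x"
  using quad_var_le_Jnorm_sq[of x "[0, j]"] Jnorm_nonneg[of x] by (simp, metis abs_le_square_iff abs_of_nonneg)

lemma exists_chain_quad_var_gt:
  assumes x: "x \<in> Jspace" and "e > 0"
  shows "\<exists>c. sorted c \<and> (Jnorm x)\<^sup>2 - e < quad_var (partial_sum x) c"
proof (rule ccontr)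
  assume "\<not> ?thesis"
  then have le: "\<And>c. sorted c \<Longrightarrow> quad_var (partial_sum x) c \<le> (Jnorm x)\<^sup>2 - e"
    by force
  then have "0 \<le> (Jnorm x)\<^sup>2 - e"
    using le[of "[]"] by simp
  then have "(Jnorm x)\<^sup>2 \<le> (Jnorm x)\<^sup>2 - e"
    using Jnorm_le_if_quad_var_le(2)[OF convergent_partial_sum[OF x] le] Jnorm_nonneg[of x]
    by (metis power_mono real_sqrt_pow2)
  with \<open>e > 0\<close> show False
    by simp
qed

lemma
  assumes "x \<in> Jspace"
  shows summable_sq_if_Jspace: "summable (\<lambda>k. (x k)\<^sup>2)"
    and l2norm_le_Jnorm: "l2norm x \<le> Jnorm x"
proof -
  have le: "(\<Sum>k<N. (x k)\<^sup>2) \<le> (Jnorm x)\<^sup>2" for N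
    using quad_var_le_Jnorm_sq[OF assms sorted_upt, of 0 "Suc N"]
    by (simp only: quad_var_partial_sum_upt[OF le0] atLeast0LessThan)
  show sm: "summable (\<lambda>k. (x k)\<^sup>2)"
    by (rule summableI_nonneg_bounded[OF _ le]) simp
  have "(\<Sum>k. (x k)\<^sup>2) \<le> (Jnorm x)\<^sup>2"
    by (rule suminf_le_const[OF sm le])
  then show "l2norm x \<le> Jnorm x"
    unfolding l2norm_def using Jnorm_nonneg[of x] by (metis real_sqrt_abs real_sqrt_le_mono abs_of_nonneg)
qed

lemma sum_sq_le_1_if_J_ball:
  assumes "a \<in> J_ball"
  shows "(\<Sum>n<N. (a n)\<^sup>2) \<le> 1"
proof -
  have "(\<Sum>n<N. (a n)\<^sup>2) \<le> (Jnorm a)\<^sup>2"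
    using quad_var_le_Jnorm_sq[OF _ sorted_upt, of a 0 "Suc N"] assms
    by (simp only: J_ball_def mem_Collect_eq quad_var_partial_sum_upt[OF le0] atLeast0LessThan)
  also have "\<dots> \<le> 1"
    using assms Jnorm_nonneg[of a] by (simp add: J_ball_def power_le_one)
  finally show ?thesis .
qed

section \<open>Chains dominated by their full refinement\<close>

text \<open>With \<open>u = b - a\<close>, \<open>v = c - b\<close>, \<open>w = d - c\<close>, a failure of the bound would force
  \<open>u v > 0\<close>, \<open>v w > 0\<close> and \<open>u w < 0\<close>, which is impossible as \<open>(u v) (v w) = (u w) v\<^sup>2\<close>.\<close>
lemma four_point_bound:
  fixes K M a b c d :: real
  assumes "K + (d - a)\<^sup>2 \<le> M" "K + (c - a)\<^sup>2 + (d - c)\<^sup>2 \<le> M" "K + (b - a)\<^sup>2 + (d - b)\<^sup>2 \<le> M"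
  shows "K + (c - a)\<^sup>2 + (d - b)\<^sup>2 \<le> M + (c - b)\<^sup>2"
proof (rule ccontr)
  assume "\<not> ?thesis"
  then have "(b - a) * (c - b) > 0" "(c - b) * (d - c) > 0" "(b - a) * (d - c) < 0"
    using assms by (simp_all add: power2_eq_square algebra_simps)
  then have "0 < ((b - a) * (c - b)) * ((c - b) * (d - c))" "((b - a) * (d - c)) * (c - b)\<^sup>2 \<le> 0"
    by (simp_all add: mult_nonpos_nonneg)
  moreover have "((b - a) * (c - b)) * ((c - b) * (d - c)) = ((b - a) * (d - c)) * (c - b)\<^sup>2"
    by (simp add: power2_eq_square algebra_simps)
  ultimately show False
    by linarith
qed

lemma quad_var_bypass:
  fixes P :: "nat \<Rightarrow> real"
  assumes bound: "\<And>c. sorted_wrt (<) c \<Longrightarrow> quad_var P c \<le> M"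
    and l: "sorted_wrt (<) l" "l \<noteq> []" "last l < m"
    and r: "sorted_wrt (<) (m # r)"
  shows "quad_var P (l @ [Suc m]) + quad_var P (m # r) \<le> M + (P (Suc m) - P m)\<^sup>2"
proof -
  have below: "\<forall>z\<in>set l. z < m"
    using l sorted_le_last[OF strict_sorted_imp_sorted[OF l(1)]] by (meson le_less_trans)
  have chain: "sorted_wrt (<) (l @ q # t)" if "m \<le> q" "sorted_wrt (<) (q # t)" for q t
    using that below l(1) by (intro sorted_wrt_less_append_Cons) auto
  have split: "quad_var P (l @ z # u) = quad_var P l + (P z - P (last l))\<^sup>2 + quad_var P (z # u)" for z u
    using quad_var_append_Cons[of P l z u] quad_var_snoc[OF l(2), of P z] by simp
  show ?thesis
  proof (cases r)
    case Nil
    then show ?thesis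
      using bound[OF chain[of "Suc m" "[]"]] by (simp add: add_increasing2)
  next
    case (Cons q t)
    with r have q: "m < q" "sorted_wrt (<) (q # t)"
      by auto
    show ?thesis
    proof (cases "q = Suc m")
      case True
      then show ?thesis
        using bound[OF chain[OF _ q(2)]] Cons split[of q t] quad_var_snoc[OF l(2), of P q] by simp
    next
      case False
      with q have "Suc m < q" "sorted_wrt (<) (Suc m # q # t)" "sorted_wrt (<) (m # q # t)"
        by auto
      then have "quad_var P (l @ q # t) \<le> M" "quad_var P (l @ Suc m # q # t) \<le> M"
          "quad_var P (l @ m # q # t) \<le> M"
        using q by (simp_all add: bound chain)
      then show ?thesis
        using four_point_bound[of "quad_var P l + quad_var P (q # t)" "P q" "P (last l)" M "P (Suc m)" "P m"]
        by (simp add: Cons split algebra_simps)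
    qed
  qed
qed

lemma quad_var_skip_le:
  fixes P :: "nat \<Rightarrow> real"
  assumes bound: "\<And>c. sorted_wrt (<) c \<Longrightarrow> quad_var P c \<le> M"
    and through: "\<And>e. 0 < e \<Longrightarrow> \<exists>w. sorted_wrt (<) w \<and> m \<in> set w \<and> M - e < quad_var P w"
    and left: "\<And>l. sorted_wrt (<) (l @ [m]) \<Longrightarrow> quad_var P (l @ [m]) \<le> G"
    and l: "sorted_wrt (<) l" "l \<noteq> []" "last l < m"
  shows "quad_var P (l @ [Suc m]) \<le> G + (P (Suc m) - P m)\<^sup>2"
proof (rule field_le_epsilon)
  fix e :: real
  assume "0 < e"
  then obtain w where w: "sorted_wrt (<) w" "m \<in> set w" "M - e < quad_var P w"
    using through by blast
  then obtain l' r where w_eq: "w = l' @ m # r"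
    by (meson split_list)
  with w(1) have "sorted_wrt (<) (l' @ [m])" "sorted_wrt (<) (m # r)"
    by (auto simp: sorted_wrt_append)
  moreover have "quad_var P w = quad_var P (l' @ [m]) + quad_var P (m # r)"
    unfolding w_eq by (rule quad_var_append_Cons)
  ultimately have "M - G - e < quad_var P (m # r)"
    using left w(3) by force
  then show "quad_var P (l @ [Suc m]) \<le> G + (P (Suc m) - P m)\<^sup>2 + e"
    using quad_var_bypass[OF bound l \<open>sorted_wrt (<) (m # r)\<close>] by simp
qed

lemma quad_var_le_initial_refinement:
  fixes P :: "nat \<Rightarrow> real"
  assumes bound: "\<And>c. sorted_wrt (<) c \<Longrightarrow> quad_var P c \<le> M"
    and through: "\<And>m e. 0 < e \<Longrightarrow> \<exists>w. sorted_wrt (<) w \<and> m \<in> set w \<and> M - e < quad_var P w"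
  shows "sorted_wrt (<) c \<Longrightarrow> c \<noteq> [] \<Longrightarrow> last c = n \<Longrightarrow> quad_var P c \<le> quad_var P [0..<Suc n]"
proof (induction n arbitrary: c)
  case n: (0 c)
  then obtain l where c: "c = l @ [0]" "sorted_wrt (<) (l @ [0])"
    by (metis append_butlast_last_id)
  then have "l = []"
    by (cases l) (auto simp: sorted_wrt_append)
  with c show ?case
    by simp
next
  case (Suc m c)
  define G where "G = quad_var P [0..<Suc m]"
  have full: "quad_var P [0..<Suc (Suc m)] = G + (P (Suc m) - P m)\<^sup>2"
    unfolding G_def using quad_var_snoc[of "[0..<Suc m]" P "Suc m"] by simp
  obtain l where c: "c = l @ [Suc m]"
    using Suc.prems by (metis append_butlast_last_id)
  with Suc.prems(1) have l: "sorted_wrt (<) l" "\<forall>z\<in>set l. z < Suc m"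
    by (auto simp: sorted_wrt_append)
  show ?case
  proof (cases "l = []")
    case True
    then show ?thesis
      using c quad_var_nonneg[of P] by simp
  next
    case False
    then have "last l \<le> m"
      using l(2) last_in_set[OF False] by fastforce
    then consider "last l = m" | "last l < m"
      by linarith
    then show ?thesis
    proof cases
      case 1
      then show ?thesis
        using Suc.IH[OF l(1) False 1] c False full 1 by (simp add: quad_var_snoc G_def)
    next
      case 2
      have "quad_var P (l' @ [m]) \<le> G" if "sorted_wrt (<) (l' @ [m])" for l'
        using Suc.IH[OF that] by (simp add: G_def)
      then show ?thesis
        using quad_var_skip_le[OF bound through _ l(1) False 2] c full by simp
    qed
  qed
qed

lemma quad_var_le_full_refinement:
  fixes P :: "nat \<Rightarrow> real"
  assumes bound: "\<And>c. sorted_wrt (<) c \<Longrightarrow> quad_var P c \<le> M"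
    and through: "\<And>m e. 0 < e \<Longrightarrow> \<exists>w. sorted_wrt (<) w \<and> m \<in> set w \<and> M - e < quad_var P w"
    and c: "sorted_wrt (<) c" "c \<noteq> []"
  shows "quad_var P c \<le> quad_var P [hd c..<Suc (last c)]"
proof -
  let ?h = "hd c" and ?n = "last c"
  have "?h \<le> ?n"
    using c sorted_le_last[OF strict_sorted_imp_sorted[OF c(1)], of ?h] by simp
  have "[0..<Suc ?n] = [0..<?h] @ [?h..<Suc ?n]"
    using upt_add_eq_append[of 0 ?h "Suc ?n - ?h"] \<open>?h \<le> ?n\<close> by (simp del: upt_Suc)
  also have "[?h..<Suc ?n] = ?h # [Suc ?h..<Suc ?n]"
    using \<open>?h \<le> ?n\<close> by (simp add: upt_conv_Cons del: upt_Suc)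
  finally have full: "quad_var P [0..<Suc ?n] = quad_var P ([0..<?h] @ [?h]) + quad_var P [?h..<Suc ?n]"
    using quad_var_append_Cons[of P "[0..<?h]" ?h "[Suc ?h..<Suc ?n]"] \<open>?h \<le> ?n\<close>
    by (simp add: upt_conv_Cons del: upt_Suc)
  have c_eq: "c = ?h # tl c"
    using c(2) by simp
  then have "quad_var P ([0..<?h] @ c) = quad_var P ([0..<?h] @ [?h]) + quad_var P c"
    using quad_var_append_Cons[of P "[0..<?h]" ?h "tl c"] by simp
  moreover have "sorted_wrt (<) ([0..<?h] @ c)"
    using c by (cases c) (auto simp: sorted_wrt_append)
  then have "quad_var P ([0..<?h] @ c) \<le> quad_var P [0..<Suc ?n]"
    using quad_var_le_initial_refinement[OF bound through] c(2) by simp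
  ultimately show ?thesis
    using full by simp
qed

section \<open>Extreme points of the unit ball\<close>

lemma partial_sum_bump:
  "partial_sum (x(m := x m + s, Suc m := x (Suc m) - s)) j = partial_sum x j + (if j = Suc m then s else 0)"
  by (induction j) (auto simp: partial_sum_Suc)

lemma square_add_le:
  fixes u s :: real
  assumes "\<bar>u\<bar> \<le> 2" "\<bar>s\<bar> \<le> 1"
  shows "(u + s)\<^sup>2 \<le> u\<^sup>2 + 5 * \<bar>s\<bar>"
proof -
  have "u * s \<le> 2 * \<bar>s\<bar>"
    using mult_right_mono[OF assms(1), of "\<bar>s\<bar>"] abs_ge_self[of "u * s"] by (simp add: abs_mult)
  moreover have "s\<^sup>2 \<le> \<bar>s\<bar>"
    using mult_right_mono[OF assms(2), of "\<bar>s\<bar>"] by (simp add: power2_eq_square)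
  ultimately show ?thesis
    unfolding power2_sum by linarith
qed

lemma quad_var_perturb_le:
  fixes P :: "nat \<Rightarrow> real"
  assumes c: "sorted_wrt (<) c" "n \<in> set c" and P: "\<And>j. \<bar>P j\<bar> \<le> 1" and s: "\<bar>s\<bar> \<le> 1"
  shows "quad_var (\<lambda>j. P j + (if j = n then s else 0)) c \<le> quad_var P c + 10 * \<bar>s\<bar>"
proof -
  define Q where "Q = (\<lambda>j. P j + (if j = n then s else 0))"
  obtain l r where lr: "c = l @ n # r"
    using split_list[OF c(2)] by blast
  with c(1) have "n \<notin> set l" "n \<notin> set r"
    by (auto simp: sorted_wrt_append)
  then have QP: "Q j = P j" if "j \<in> set l \<union> set r" for j
    using that unfolding Q_def by auto
  have Qn: "Q n = P n + s"
    by (simp add: Q_def)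
  have diff_le: "\<bar>P j - P j'\<bar> \<le> 2" for j j'
    using P[of j] P[of j'] by linarith
  have left: "quad_var Q (l @ [n]) \<le> quad_var P (l @ [n]) + 5 * \<bar>s\<bar>"
  proof (cases "l = []")
    case False
    have "quad_var Q l = quad_var P l"
      by (intro quad_var_cong QP) simp
    moreover have "Q (last l) = P (last l)"
      using QP False by simp
    ultimately show ?thesis
      using False square_add_le[OF diff_le[of n "last l"] s] Qn by (simp add: quad_var_snoc algebra_simps)
  qed simp
  have right: "quad_var Q (n # r) \<le> quad_var P (n # r) + 5 * \<bar>s\<bar>"
  proof (cases r)
    case (Cons h t)
    have "quad_var Q r = quad_var P r"
      by (intro quad_var_cong QP) simp
    moreover have "Q h = P h"
      using QP Cons by simp
    ultimately show ?thesis
      using Cons square_add_le[OF diff_le[of h n], of "- s"] s Qn by (simp add: algebra_simps)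
  qed simp
  show ?thesis
    using left right quad_var_append_Cons[of Q l n r] quad_var_append_Cons[of P l n r]
    unfolding Q_def[symmetric] lr by simp
qed

lemma bump_in_J_ball:
  assumes x: "x \<in> Jspace" "Jnorm x = 1"
    and through_le: "\<And>w. sorted_wrt (<) w \<Longrightarrow> Suc m \<in> set w \<Longrightarrow> quad_var (partial_sum x) w \<le> 1 - e"
    and s: "10 * \<bar>s\<bar> \<le> e"
  shows "x(m := x m + s, Suc m := x (Suc m) - s) \<in> J_ball"
proof -
  define y where "y = x(m := x m + s, Suc m := x (Suc m) - s)"
  have Py: "partial_sum y = (\<lambda>j. partial_sum x j + (if j = Suc m then s else 0))"
    unfolding y_def by (intro ext) (rule partial_sum_bump)
  have "\<bar>s\<bar> \<le> 1"
    using through_le[of "[Suc m]"] s by simp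
  have "(\<lambda>j. if j = Suc m then s else 0) \<longlonglongrightarrow> 0"
    by (rule tendsto_eventually) (use eventually_gt_at_top[of "Suc m"] in \<open>eventually_elim, simp\<close>)
  then have conv: "convergent (partial_sum y)"
    unfolding Py using convergent_partial_sum[OF x(1)] by (intro convergent_add) (auto simp: convergent_def)
  have bound: "quad_var (partial_sum y) c \<le> 1" if "sorted c" for c
  proof -
    let ?c = "remdups_adj c"
    have strict: "sorted_wrt (<) ?c"
      using that by (rule sorted_wrt_less_remdups_adj)
    have "quad_var (partial_sum y) ?c \<le> 1"
    proof (cases "Suc m \<in> set ?c")
      case True
      have "\<bar>partial_sum x j\<bar> \<le> 1" for j
        using abs_partial_sum_le_Jnorm[OF x(1)] x(2) by simp
      then have "quad_var (partial_sum y) ?c \<le> quad_var (partial_sum x) ?c + 10 * \<bar>s\<bar>"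
        unfolding Py using quad_var_perturb_le[OF strict True _ \<open>\<bar>s\<bar> \<le> 1\<close>] by blast
      then show ?thesis
        using through_le[OF strict True] s by simp
    next
      case False
      then have "quad_var (partial_sum y) ?c = quad_var (partial_sum x) ?c"
        unfolding Py by (intro quad_var_cong) auto
      then show ?thesis
        using quad_var_le_Jnorm_sq[OF x(1) strict_sorted_imp_sorted[OF strict]] x(2) by simp
    qed
    then show ?thesis
      by (simp add: quad_var_remdups_adj)
  qed
  have "y \<in> Jspace" "Jnorm y \<le> sqrt 1"
    using Jnorm_le_if_quad_var_le[OF conv bound zero_le_one] by simp_all
  then show ?thesis
    unfolding J_ball_def y_def by simp
qed

lemma extreme_point_chain_through_gt:
  assumes x: "x \<in> Jspace" "Jnorm x = 1" and ext: "seq_extreme_point x J_ball" and "0 < e"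
  shows "\<exists>w. sorted_wrt (<) w \<and> n \<in> set w \<and> 1 - e < quad_var (partial_sum x) w"
proof (cases n)
  case 0
  obtain c where c: "sorted c" "1 - e < quad_var (partial_sum x) c"
    using exists_chain_quad_var_gt[OF x(1) \<open>0 < e\<close>] x(2) by auto
  have "sorted_wrt (<) (remdups_adj (0 # c))"
    using c(1) by (intro sorted_wrt_less_remdups_adj) simp
  moreover have "quad_var (partial_sum x) c \<le> quad_var (partial_sum x) (remdups_adj (0 # c))"
    by (simp add: quad_var_remdups_adj quad_var_le_Cons)
  ultimately show ?thesis
    using c(2) 0 by (intro exI[of _ "remdups_adj (0 # c)"]) auto
next
  case (Suc m)
  show ?thesis
  proof (rule ccontr)
    assume "\<not> ?thesis"
    then have le: "\<And>w. sorted_wrt (<) w \<Longrightarrow> Suc m \<in> set w \<Longrightarrow> quad_var (partial_sum x) w \<le> 1 - e"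
      using Suc by force
    define t where "t = e / 10"
    define y where "y s = x(m := x m + s, Suc m := x (Suc m) - s)" for s
    have "10 * \<bar>s\<bar> \<le> e" if "\<bar>s\<bar> \<le> t" for s
      using that unfolding t_def by linarith
    then have "y s \<in> J_ball" if "\<bar>s\<bar> \<le> t" for s
      using bump_in_J_ball[OF x le] that unfolding y_def by blast
    then have "y (- t) \<in> J_ball" "y t \<in> J_ball"
      using \<open>0 < e\<close> by (simp_all add: t_def)
    moreover have "y (- t) \<noteq> y t"
      using \<open>0 < e\<close> by (auto simp: y_def t_def fun_eq_iff dest: spec[of _ m])
    moreover have "x = (\<lambda>k. (1 - 1 / 2) * y (- t) k + 1 / 2 * y t k)"
      by (auto simp: y_def fun_eq_iff field_simps)
    moreover have "(0::real) < 1 / 2" "(1::real) / 2 < 1"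
      by simp_all
    ultimately show False
      using ext unfolding seq_extreme_point_def by blast
  qed
qed

lemma quad_var_le_sum_sq_if_extreme:
  assumes x: "x \<in> Jspace" "Jnorm x = 1" and ext: "seq_extreme_point x J_ball"
    and c: "sorted_wrt (<) c" "c \<noteq> []"
  shows "quad_var (partial_sum x) c \<le> (\<Sum>k\<in>{hd c..<last c}. (x k)\<^sup>2)"
proof -
  have "quad_var (partial_sum x) c \<le> quad_var (partial_sum x) [hd c..<Suc (last c)]"
    using quad_var_le_Jnorm_sq[OF x(1) strict_sorted_imp_sorted] x(2)
      extreme_point_chain_through_gt[OF x ext]
    by (intro quad_var_le_full_refinement[OF _ _ c, of _ 1]) auto
  moreover have "hd c \<le> last c"
    using c sorted_le_last[OF strict_sorted_imp_sorted[OF c(1)], of "hd c"] by simp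
  ultimately show ?thesis
    using quad_var_partial_sum_upt[of "hd c" "last c" x] by (simp del: upt_Suc)
qed

lemma interval_initial_segments:
  assumes "is_interval_nat I"
  obtains g lo where "mono g" "\<And>j. lo \<le> g j" "\<And>j. I \<inter> {..<j} = {lo..<g j}"
proof (cases "finite I")
  case True
  define lo hi where "lo = Min I" and "hi = Max I"
  have I: "I = {lo..hi}"
    unfolding lo_def hi_def using finite_interval_eq_atLeastAtMost[OF assms True] .
  then have "lo \<le> hi"
    using assms by (simp add: is_interval_nat_def)
  show ?thesis
    by (rule that[of "\<lambda>j. min (max j lo) (Suc hi)" lo]) (use I \<open>lo \<le> hi\<close> in \<open>auto simp: mono_def\<close>)
next
  case False
  define lo where "lo = (LEAST z. z \<in> I)"
  have I: "I = {lo..}"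
    unfolding lo_def using infinite_interval_eq_atLeast[OF assms False] .
  show ?thesis
    by (rule that[of "\<lambda>j. max j lo" lo]) (use I in \<open>auto simp: mono_def\<close>)
qed

lemma quad_var_window_le:
  assumes dom: "\<And>c. sorted_wrt (<) c \<Longrightarrow> c \<noteq> [] \<Longrightarrow>
      quad_var (partial_sum x) c \<le> (\<Sum>k\<in>{hd c..<last c}. (x k)\<^sup>2)"
    and g: "mono g" "\<And>j. lo \<le> g j"
    and Pz: "\<And>j. partial_sum z j = partial_sum x (g j) - partial_sum x lo"
    and z_eq: "\<And>j k. k \<in> {lo..<g j} \<Longrightarrow> z k = x k"
    and sz: "summable (\<lambda>k. (z k)\<^sup>2)"
    and c: "sorted c"
  shows "quad_var (partial_sum z) c \<le> (\<Sum>k. (z k)\<^sup>2)"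
proof -
  have "sorted (map g c)"
    using c g(1) by (intro sorted_map_mono) (auto simp: mono_on_def mono_def)
  then have sorted: "sorted (lo # map g c)"
    using g(2) by simp
  have "partial_sum z = (\<lambda>j. (partial_sum x \<circ> g) j + - partial_sum x lo)"
    by (simp add: fun_eq_iff Pz)
  then have "quad_var (partial_sum z) c = quad_var (partial_sum x) (map g c)"
    by (simp only: quad_var_add_const quad_var_map)
  also have "\<dots> \<le> quad_var (partial_sum x) (remdups_adj (lo # map g c))"
    unfolding quad_var_remdups_adj by (rule quad_var_le_Cons)
  also have "\<dots> \<le> (\<Sum>k\<in>{lo..<last (lo # map g c)}. (x k)\<^sup>2)"
    using dom[OF sorted_wrt_less_remdups_adj[OF sorted]] by simp
  also have "\<dots> \<le> (\<Sum>k. (z k)\<^sup>2)"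
  proof (cases "c = []")
    case False
    then have "(\<Sum>k\<in>{lo..<last (lo # map g c)}. (x k)\<^sup>2) = (\<Sum>k\<in>{lo..<g (last c)}. (z k)\<^sup>2)"
      using z_eq[of _ "last c"] by (simp add: last_map)
    also have "\<dots> \<le> (\<Sum>k. (z k)\<^sup>2)"
      using sz by (intro sum_le_suminf) auto
    finally show ?thesis .
  qed (use sz in \<open>simp add: suminf_nonneg\<close>)
  finally show ?thesis .
qed

lemma Jnorm_restrict_le_l2norm:
  assumes x: "x \<in> Jspace"
    and dom: "\<And>c. sorted_wrt (<) c \<Longrightarrow> c \<noteq> [] \<Longrightarrow>
      quad_var (partial_sum x) c \<le> (\<Sum>k\<in>{hd c..<last c}. (x k)\<^sup>2)"
    and I: "is_interval_nat I"
  shows "restrict_seq x I \<in> Jspace" "Jnorm (restrict_seq x I) \<le> l2norm (restrict_seq x I)"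
proof -
  define z where "z = restrict_seq x I"
  obtain g lo where g: "mono g" "\<And>j. lo \<le> g j" "\<And>j. I \<inter> {..<j} = {lo..<g j}"
    using interval_initial_segments[OF I] by blast
  have z_eq: "z k = x k" if "k \<in> {lo..<g j}" for k j
  proof -
    have "k \<in> I"
      using that g(3)[of j, symmetric] by blast
    then show ?thesis
      by (simp add: z_def restrict_seq_def)
  qed
  have "partial_sum z j = sum x ({..<j} \<inter> I)" for j
    unfolding partial_sum_def z_def restrict_seq_def by (simp add: sum.inter_restrict)
  then have Pz: "partial_sum z j = partial_sum x (g j) - partial_sum x lo" for j
    using g(2) g(3)[of j] by (simp add: Int_commute sum_atLeastLessThan_eq_partial_sum_diff)
  obtain L where "(partial_sum x \<circ> g) \<longlonglongrightarrow> L"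
    using convergent_comp_mono[OF convergent_partial_sum[OF x] g(1)] by (auto simp: convergent_def)
  then have "(\<lambda>j. partial_sum x (g j) - partial_sum x lo) \<longlonglongrightarrow> L - partial_sum x lo"
    by (intro tendsto_diff tendsto_const) (simp add: comp_def)
  then have conv: "convergent (partial_sum z)"
    unfolding Pz by (rule convergentI)
  have sz: "summable (\<lambda>k. (z k)\<^sup>2)"
    by (rule summable_comparison_test'[OF summable_sq_if_Jspace[OF x]]) (simp add: z_def restrict_seq_def)
  have bound: "quad_var (partial_sum z) c \<le> (\<Sum>k. (z k)\<^sup>2)" if "sorted c" for c
    using dom g(1,2) Pz z_eq sz that by (rule quad_var_window_le)
  have "0 \<le> (\<Sum>k. (z k)\<^sup>2)"
    using sz by (simp add: suminf_nonneg)
  from Jnorm_le_if_quad_var_le[OF conv bound this]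
  show "z \<in> Jspace" "Jnorm z \<le> l2norm z"
    unfolding l2norm_def by simp_all
qed

lemma Jnorm_restrict_eq_l2norm_if_extreme:
  assumes "x \<in> Jspace" "Jnorm x = 1" "seq_extreme_point x J_ball" "is_interval_nat I"
  shows "Jnorm (restrict_seq x I) = l2norm (restrict_seq x I)"
proof -
  note restrict = Jnorm_restrict_le_l2norm[OF assms(1) quad_var_le_sum_sq_if_extreme[OF assms(1-3)] assms(4)]
  show ?thesis
    using restrict(2) l2norm_le_Jnorm[OF restrict(1)] by (rule antisym)
qed

section \<open>Spreading a norming family\<close>

lemma sum_sq_convex_combination:
  fixes a c :: "nat \<Rightarrow> real"
  shows "(\<Sum>n\<in>A. ((1 - u) * a n + u * c n)\<^sup>2)
    = (1 - u) * (\<Sum>n\<in>A. (a n)\<^sup>2) + u * (\<Sum>n\<in>A. (c n)\<^sup>2) - u * (1 - u) * (\<Sum>n\<in>A. (a n - c n)\<^sup>2)"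
  by (simp add: sum_distrib_left sum_subtractf[symmetric] sum.distrib[symmetric] power2_eq_square algebra_simps)

lemma seq_extreme_point_if_l2norm_eq_1:
  assumes y: "y \<in> J_ball" "l2norm y = 1"
  shows "seq_extreme_point y J_ball"
  unfolding seq_extreme_point_def
proof (intro conjI ballI impI notI)
  fix a c assume a: "a \<in> J_ball" and c: "c \<in> J_ball" and "a \<noteq> c"
  assume "\<exists>u. 0 < u \<and> u < 1 \<and> y = (\<lambda>n. (1 - u) * a n + u * c n)"
  then obtain u where u: "0 < u" "u < 1" and y_eq: "y = (\<lambda>n. (1 - u) * a n + u * c n)"
    by blast
  obtain j where "a j \<noteq> c j"
    using \<open>a \<noteq> c\<close> by blast
  define \<eta> where "\<eta> = u * (1 - u) * (a j - c j)\<^sup>2"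
  have "0 < \<eta>"
    unfolding \<eta>_def using u \<open>a j \<noteq> c j\<close> by simp
  have partial: "(\<Sum>n<N. (y n)\<^sup>2) \<le> 1 - \<eta>" if "j < N" for N
  proof -
    have "(a j - c j)\<^sup>2 \<le> (\<Sum>n<N. (a n - c n)\<^sup>2)"
      using that by (intro member_le_sum) auto
    then have "\<eta> \<le> u * (1 - u) * (\<Sum>n<N. (a n - c n)\<^sup>2)"
      unfolding \<eta>_def using u by (intro mult_left_mono) auto
    moreover have "(1 - u) * (\<Sum>n<N. (a n)\<^sup>2) \<le> 1 - u" "u * (\<Sum>n<N. (c n)\<^sup>2) \<le> u"
      using sum_sq_le_1_if_J_ball[OF a] sum_sq_le_1_if_J_ball[OF c] u by (simp_all add: mult_left_le)
    ultimately show ?thesis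
      unfolding y_eq sum_sq_convex_combination by linarith
  qed
  have "summable (\<lambda>n. (y n)\<^sup>2)"
    using y(1) summable_sq_if_Jspace by (simp add: J_ball_def)
  from summable_LIMSEQ[OF this] have "(\<Sum>n. (y n)\<^sup>2) \<le> 1 - \<eta>"
    by (rule LIMSEQ_le_const2) (use partial in \<open>auto intro: exI[of _ "Suc j"]\<close>)
  moreover have "(\<Sum>n. (y n)\<^sup>2) = 1"
    using y(2) unfolding l2norm_def by simp
  ultimately show False
    using \<open>0 < \<eta>\<close> by simp
qed (use y in simp)

lemma down_closed_eq_lessThan_card:
  assumes "finite (S::nat set)" "\<And>i j. i \<in> S \<Longrightarrow> j \<le> i \<Longrightarrow> j \<in> S"
  shows "S = {..<card S}"
proof (cases "S = {}")
  case False
  have "S = {..Max S}"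
  proof
    show "S \<subseteq> {..Max S}"
      using assms(1) by auto
    show "{..Max S} \<subseteq> S"
      using assms(2) Max_in[OF assms(1) False] by blast
  qed
  then show ?thesis
    by (metis card_atMost lessThan_Suc_atMost)
qed simp

locale norming =
  fixes x :: "nat \<Rightarrow> real" and F :: "nat set" and \<I> :: "nat \<Rightarrow> nat set"
  assumes x_in_Jspace: "x \<in> Jspace" and norming: "norming_family x F \<I>"
begin

definition b :: "nat \<Rightarrow> real" where
  "b i = interval_sum x (\<I> i)"

definition lo :: "nat \<Rightarrow> nat" where
  "lo i = (LEAST z. z \<in> \<I> i)"

definition hi :: "nat \<Rightarrow> nat" where
  "hi i = Max (\<I> i)" \<comment> \<open>meaningful only for finite intervals\<close>

definition total :: real where
  "total = lim (partial_sum x)"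

lemma F_cases: "F = UNIV \<or> (\<exists>m\<ge>1. F = {..<m})"
  using norming unfolding norming_family_def interval_family_def by blast

lemma is_interval_member: "i \<in> F \<Longrightarrow> is_interval_nat (\<I> i)"
  using norming unfolding norming_family_def interval_family_def by blast

lemma interval_less_Suc: "i \<in> F \<Longrightarrow> Suc i \<in> F \<Longrightarrow> a \<in> \<I> i \<Longrightarrow> c \<in> \<I> (Suc i) \<Longrightarrow> a < c"
  using norming unfolding norming_family_def interval_family_def by blast

lemma F_down: "i \<in> F \<Longrightarrow> j \<le> i \<Longrightarrow> j \<in> F"
  using F_cases by auto

lemma zero_in_F: "0 \<in> F"
  using F_cases by auto

lemma interval_nonempty: "i \<in> F \<Longrightarrow> \<I> i \<noteq> {}"
  using is_interval_member unfolding is_interval_nat_def by blast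

lemma interval_less: "i < j \<Longrightarrow> j \<in> F \<Longrightarrow> a \<in> \<I> i \<Longrightarrow> c \<in> \<I> j \<Longrightarrow> a < c"
proof (induction j arbitrary: c)
  case (Suc j)
  then have "j \<in> F"
    using F_down by simp
  show ?case
  proof (cases "i = j")
    case False
    then have "i < j"
      using Suc.prems(1) by simp
    obtain w where "w \<in> \<I> j"
      using interval_nonempty[OF \<open>j \<in> F\<close>] by blast
    then have "a < w" "w < c"
      using Suc.IH[OF \<open>i < j\<close> \<open>j \<in> F\<close> Suc.prems(3)] interval_less_Suc[OF \<open>j \<in> F\<close> Suc.prems(2) _ Suc.prems(4)]
      by blast+
    then show ?thesis
      by simp
  qed (use interval_less_Suc[OF \<open>j \<in> F\<close>] Suc.prems in blast)
qed simp

lemma lo_in: "i \<in> F \<Longrightarrow> lo i \<in> \<I> i"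
  unfolding lo_def using interval_nonempty by (metis LeastI ex_in_conv)

lemma lo_le: "z \<in> \<I> i \<Longrightarrow> lo i \<le> z"
  unfolding lo_def by (rule Least_le)

lemma lo_less: "i < j \<Longrightarrow> j \<in> F \<Longrightarrow> lo i < lo j"
  using interval_less lo_in F_down by (meson less_imp_le)

lemma lo_mono: "c \<le> c' \<Longrightarrow> c' \<in> F \<Longrightarrow> lo c \<le> lo c'"
  using lo_less[of c c'] by (cases "c = c'") auto

lemma hi_in: "i \<in> F \<Longrightarrow> finite (\<I> i) \<Longrightarrow> hi i \<in> \<I> i"
  unfolding hi_def using interval_nonempty by simp

lemma ge_hi: "finite (\<I> i) \<Longrightarrow> z \<in> \<I> i \<Longrightarrow> z \<le> hi i"
  unfolding hi_def by simp

lemma inj_on_\<I>: "inj_on \<I> F"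
proof (rule inj_onI)
  fix i j assume ij: "i \<in> F" "j \<in> F" "\<I> i = \<I> j"
  show "i = j"
  proof (rule ccontr)
    assume "i \<noteq> j"
    then consider "i < j" | "j < i"
      by linarith
    then show False
      by cases (use interval_less lo_in ij in fastforce)+
  qed
qed

lemma finite_interval_if_Suc_in: "i \<in> F \<Longrightarrow> Suc i \<in> F \<Longrightarrow> finite (\<I> i)"
proof -
  assume i: "i \<in> F" "Suc i \<in> F"
  have "\<I> i \<subseteq> {..<lo (Suc i)}"
    using interval_less_Suc[OF i] lo_in[OF i(2)] by auto
  then show ?thesis
    by (rule finite_subset) simp
qed

lemma finite_interval_eq: "i \<in> F \<Longrightarrow> finite (\<I> i) \<Longrightarrow> \<I> i = {lo i..<Suc (hi i)} \<and> lo i \<le> hi i"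
proof -
  assume i: "i \<in> F" "finite (\<I> i)"
  have "\<I> i = {Min (\<I> i)..hi i}"
    unfolding hi_def by (rule finite_interval_eq_atLeastAtMost[OF is_interval_member[OF i(1)] i(2)])
  moreover have "Min (\<I> i) = lo i"
    using i lo_in[OF i(1)] lo_le by (intro antisym) (simp_all add: interval_nonempty)
  moreover have "lo i \<le> hi i"
    using lo_le[OF hi_in[OF i]] .
  ultimately show ?thesis
    by (simp add: atLeastLessThanSuc_atLeastAtMost)
qed

lemma infinite_interval_eq: "i \<in> F \<Longrightarrow> infinite (\<I> i) \<Longrightarrow> \<I> i = {lo i..}"
  unfolding lo_def by (rule infinite_interval_eq_atLeast[OF is_interval_member])

lemma partial_sum_tendsto_total: "partial_sum x \<longlonglongrightarrow> total"
  using convergent_partial_sum[OF x_in_Jspace] unfolding total_def by (simp add: convergent_LIMSEQ_iff)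

lemma b_finite:
  assumes "i \<in> F" "finite (\<I> i)"
  shows "b i = partial_sum x (Suc (hi i)) - partial_sum x (lo i)"
  using finite_interval_eq[OF assms] interval_sum_atLeastLessThan[of "lo i" "Suc (hi i)" x] unfolding b_def by simp

lemma b_infinite:
  assumes "i \<in> F" "infinite (\<I> i)"
  shows "b i = total - partial_sum x (lo i)"
  using infinite_interval_eq[OF assms] interval_sum_atLeast[OF partial_sum_tendsto_total, of "lo i"]
  unfolding b_def by simp

lemma image_in_interval_families:
  assumes "finite F'" "F' \<subseteq> F"
  shows "\<I> ` F' \<in> interval_families"
proof -
  have "disjnt (\<I> i) (\<I> j)" if "i \<in> F'" "j \<in> F'" "i \<noteq> j" for i j
  proof -
    have "i \<in> F" "j \<in> F"
      using that assms(2) by auto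
    then show ?thesis
      using \<open>i \<noteq> j\<close> interval_less[of i j] interval_less[of j i] unfolding disjnt_def
      by (metis disjoint_iff linorder_neqE_nat less_irrefl)
  qed
  then have "disjoint (\<I> ` F')"
    by (auto simp: pairwise_def)
  then show ?thesis
    unfolding interval_families_def using assms is_interval_member by auto
qed

lemma family_sqsum_image:
  assumes "finite F'" "F' \<subseteq> F"
  shows "family_sqsum x (\<I> ` F') = (\<Sum>i\<in>F'. (b i)\<^sup>2)"
  using inj_on_subset[OF inj_on_\<I> assms(2)] by (simp add: family_sqsum_def b_def sum.reindex)

lemma sum_b_sq_le_Jnorm_sq: "finite F' \<Longrightarrow> F' \<subseteq> F \<Longrightarrow> (\<Sum>i\<in>F'. (b i)\<^sup>2) \<le> (Jnorm x)\<^sup>2"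
  using family_sqsum_le_Jnorm_sq[OF x_in_Jspace image_in_interval_families] family_sqsum_image by simp

lemma b_sq_has_sum: "((\<lambda>i. (b i)\<^sup>2) has_sum (Jnorm x)\<^sup>2) F"
proof -
  have "(\<lambda>i. (b i)\<^sup>2) summable_on F"
    using sum_b_sq_le_Jnorm_sq by (intro nonneg_bdd_above_summable_on bdd_aboveI) auto
  moreover have "sqrt (infsum (\<lambda>i. (b i)\<^sup>2) F) = Jnorm x"
    using norming unfolding norming_family_def b_def by blast
  then have "infsum (\<lambda>i. (b i)\<^sup>2) F = (Jnorm x)\<^sup>2"
    using infsum_nonneg[of F "\<lambda>i. (b i)\<^sup>2"] by (metis real_sqrt_pow2 zero_le_power2)
  ultimately show ?thesis
    using has_sum_infsum by metis
qed

lemma gap_interval_sum_eq_0: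
  assumes G: "is_interval_nat G" "\<And>i. i \<in> F \<Longrightarrow> G \<inter> \<I> i = {}"
  shows "interval_sum x G = 0"
proof -
  let ?g = "interval_sum x G"
  have "(\<Sum>i\<in>F'. (b i)\<^sup>2) \<le> (Jnorm x)\<^sup>2 - ?g\<^sup>2" if "finite F'" "F' \<subseteq> F" for F'
  proof -
    have "G \<notin> \<I> ` F'"
      using G that(2) unfolding is_interval_nat_def by fastforce
    moreover have "insert G (\<I> ` F') \<in> interval_families"
      using image_in_interval_families[OF that] G that(2)
      by (intro interval_families_insert) (auto simp: Int_commute)
    ultimately have "?g\<^sup>2 + family_sqsum x (\<I> ` F') \<le> (Jnorm x)\<^sup>2"
      using family_sqsum_le_Jnorm_sq[OF x_in_Jspace] that(1) by (fastforce simp: family_sqsum_def)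
    then show ?thesis
      using family_sqsum_image[OF that] by simp
  qed
  then have "(Jnorm x)\<^sup>2 \<le> (Jnorm x)\<^sup>2 - ?g\<^sup>2"
    by (rule has_sum_le_finite_sums[OF b_sq_has_sum])
  then show ?thesis
    by simp
qed

lemma partial_sum_eq_if_gap:
  assumes "a \<le> c" and gap: "\<And>i z. i \<in> F \<Longrightarrow> z \<in> \<I> i \<Longrightarrow> z < a \<or> c \<le> z"
  shows "partial_sum x a = partial_sum x c"
proof (cases "a = c")
  case False
  with \<open>a \<le> c\<close> have "interval_sum x {a..<c} = 0"
    using gap by (intro gap_interval_sum_eq_0 is_interval_nat_atLeastLessThan) fastforce+
  then show ?thesis
    using \<open>a \<le> c\<close> by (simp add: interval_sum_atLeastLessThan)
qed simp

lemma partial_sum_lo_0: "partial_sum x (lo 0) = 0"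
proof -
  have "lo 0 \<le> z" if "i \<in> F" "z \<in> \<I> i" for i z
    using that lo_le[of z 0] interval_less[of 0 i "lo 0" z] lo_in[OF zero_in_F] by (cases "i = 0") auto
  then show ?thesis
    using partial_sum_eq_if_gap[of 0 "lo 0"] by fastforce
qed

lemma partial_sum_Suc_hi:
  assumes i: "i \<in> F" "Suc i \<in> F"
  shows "partial_sum x (Suc (hi i)) = partial_sum x (lo (Suc i))"
proof (rule partial_sum_eq_if_gap)
  have fin: "finite (\<I> i)"
    using finite_interval_if_Suc_in[OF i] .
  show "Suc (hi i) \<le> lo (Suc i)"
    using interval_less_Suc[OF i hi_in[OF i(1) fin] lo_in[OF i(2)]] by simp
  fix j z assume j: "j \<in> F" "z \<in> \<I> j"
  consider "j < i" | "j = i" | "j = Suc i" | "Suc i < j"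
    by linarith
  then show "z < Suc (hi i) \<or> lo (Suc i) \<le> z"
  proof cases
    case 1
    then show ?thesis
      using interval_less[OF 1 i(1) j(2) hi_in[OF i(1) fin]] by simp
  next
    case 2
    then show ?thesis
      using ge_hi[OF fin] j(2) by fastforce
  next
    case 3
    then show ?thesis
      using lo_le j(2) by simp
  next
    case 4
    then show ?thesis
      using interval_less[OF 4 j(1) lo_in[OF i(2)] j(2)] by simp
  qed
qed

lemma partial_sum_Suc_hi_last:
  assumes i: "i \<in> F" "Suc i \<notin> F" "finite (\<I> i)"
  shows "partial_sum x (Suc (hi i)) = total"
proof -
  have "{Suc (hi i)..} \<inter> \<I> j = {}" if "j \<in> F" for j
  proof -
    have "j \<le> i"
      using that i(2) F_down[of j "Suc i"] by (meson not_less_eq_eq)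
    then have "z \<le> hi i" if "z \<in> \<I> j" for z
      using that interval_less[of j i z "hi i"] i(1) hi_in[OF i(1,3)] ge_hi[OF i(3)]
      by (cases "j = i") (simp_all add: less_imp_le)
    then show ?thesis
      by fastforce
  qed
  then have "interval_sum x {Suc (hi i)..} = 0"
    by (intro gap_interval_sum_eq_0 is_interval_nat_atLeast)
  then show ?thesis
    using interval_sum_atLeast[OF partial_sum_tendsto_total] by simp
qed

definition bsum :: "nat \<Rightarrow> real" where
  "bsum c = (\<Sum>i\<in>F \<inter> {..<c}. b i)"

lemma bsum_eq: "bsum c = (if c \<in> F then partial_sum x (lo c) else total)"
proof (induction c)
  case 0
  then show ?case
    using zero_in_F partial_sum_lo_0 by (simp add: bsum_def)
next
  case (Suc c)
  show ?case
  proof (cases "c \<in> F")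
    case False
    then have "Suc c \<notin> F" "F \<inter> {..<Suc c} = F \<inter> {..<c}"
      using F_down[of "Suc c" c] by (auto simp: less_Suc_eq)
    then show ?thesis
      using Suc.IH False by (simp add: bsum_def)
  next
    case True
    then have "bsum (Suc c) = partial_sum x (lo c) + b c"
      using Suc.IH by (simp add: bsum_def lessThan_Suc Int_insert_right)
    moreover have "b c = (if Suc c \<in> F then partial_sum x (lo (Suc c)) else total) - partial_sum x (lo c)"
      using b_finite[OF True] b_infinite[OF True] finite_interval_if_Suc_in[OF True]
        partial_sum_Suc_hi[OF True] partial_sum_Suc_hi_last[OF True]
      by (cases "finite (\<I> c)") auto
    ultimately show ?thesis
      by simp
  qed
qed

lemma quad_var_bsum_le:
  assumes "sorted d"
  shows "quad_var bsum d \<le> (Jnorm x)\<^sup>2"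
proof -
  define pt where "pt N c = (if c \<in> F then lo c else N)" for N c
  define N0 where "N0 = Max (insert 0 (lo ` set d))"
  have lim: "(\<lambda>N. quad_var (partial_sum x \<circ> pt N) d) \<longlonglongrightarrow> quad_var bsum d"
  proof (rule quad_var_tendsto)
    fix c
    show "(\<lambda>N. (partial_sum x \<circ> pt N) c) \<longlonglongrightarrow> bsum c"
      using partial_sum_tendsto_total by (simp add: pt_def bsum_eq)
  qed
  have le: "quad_var (partial_sum x \<circ> pt N) d \<le> (Jnorm x)\<^sup>2" if "N0 \<le> N" for N
  proof -
    have "pt N c \<le> pt N c'" if "c \<in> set d" "c \<le> c'" for c c'
    proof (cases "c' \<in> F")
      case True
      then show ?thesis
        using F_down[OF True \<open>c \<le> c'\<close>] lo_mono[OF \<open>c \<le> c'\<close> True] by (simp add: pt_def)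
    next
      case False
      have "lo c \<le> N0"
        unfolding N0_def using \<open>c \<in> set d\<close> by (intro Max_ge) auto
      then show ?thesis
        using False \<open>N0 \<le> N\<close> by (simp add: pt_def)
    qed
    then have "sorted (map (pt N) d)"
      using \<open>sorted d\<close> by (intro sorted_map_mono) (auto simp: mono_on_def)
    from quad_var_le_Jnorm_sq[OF x_in_Jspace this] show ?thesis
      by (simp add: quad_var_map)
  qed
  show ?thesis
    using lim by (rule LIMSEQ_le_const2) (use le in blast)
qed

lemma convergent_bsum: "convergent bsum"
proof (cases "F = UNIV")
  case True
  then have "bsum c = (partial_sum x \<circ> lo) c" for c
    using bsum_eq[of c] by simp
  then have "bsum = partial_sum x \<circ> lo"
    by blast
  moreover have "strict_mono lo"
    using True lo_less by (simp add: strict_mono_def)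
  ultimately show ?thesis
    using LIMSEQ_subseq_LIMSEQ[OF partial_sum_tendsto_total] by (metis convergentI)
next
  case False
  then obtain m where "F = {..<m}"
    using F_cases by blast
  have "bsum c = total" if "m \<le> c" for c
  proof -
    have "c \<notin> F"
      using \<open>F = {..<m}\<close> that by simp
    then show ?thesis
      by (simp add: bsum_eq)
  qed
  then have "\<forall>\<^sub>F c in sequentially. bsum c = total"
    by (rule eventually_sequentiallyI)
  then show ?thesis
    by (rule convergentI[OF tendsto_eventually])
qed

end

locale spreading = norming +
  fixes k :: "nat \<Rightarrow> nat"
  assumes strict_mono_k: "strict_mono_on F k"
begin

definition y :: "nat \<Rightarrow> real" where
  "y = spread_seq F k b"

definition count :: "nat \<Rightarrow> nat" where
  "count j = card {i \<in> F. k i < j}"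

lemma inj_on_k: "inj_on k F"
  using strict_mono_k by (rule strict_mono_on_imp_inj_on)

lemma k_mono: "i \<le> i' \<Longrightarrow> i' \<in> F \<Longrightarrow> k i \<le> k i'"
  using strict_mono_k F_down by (cases "i = i'") (auto simp: strict_mono_on_def less_imp_le)

lemma le_k: "i \<in> F \<Longrightarrow> i \<le> k i"
proof (induction i)
  case (Suc i)
  then have "i \<in> F"
    using F_down by simp
  then have "k i < k (Suc i)"
    using strict_mono_k Suc.prems by (simp add: strict_mono_onD)
  then show ?case
    using Suc.IH[OF \<open>i \<in> F\<close>] by simp
qed simp

lemma below_eq: "{i \<in> F. k i < j} = {..<count j}"
proof -
  have "{i \<in> F. k i < j} \<subseteq> {..<j}"
    using le_k by fastforce
  then have "finite {i \<in> F. k i < j}"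
    using finite_subset by blast
  moreover have "i' \<in> {i \<in> F. k i < j}" if "i \<in> {i \<in> F. k i < j}" "i' \<le> i" for i i'
    using that F_down[of i i'] k_mono[of i' i] by fastforce
  ultimately show ?thesis
    unfolding count_def by (rule down_closed_eq_lessThan_card)
qed

lemma y_k: "i \<in> F \<Longrightarrow> y (k i) = b i"
  unfolding y_def spread_seq_def using inj_on_k by simp

lemma y_outside: "n \<notin> k ` F \<Longrightarrow> y n = 0"
  unfolding y_def spread_seq_def by simp

lemma partial_sum_y: "partial_sum y j = bsum (count j)"
proof -
  have "partial_sum y j = sum y ({..<j} \<inter> k ` F)"
    unfolding partial_sum_def by (rule sum.mono_neutral_right) (auto simp: y_outside)
  also have "{..<j} \<inter> k ` F = k ` {i \<in> F. k i < j}"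
    by auto
  also have "sum y (k ` {i \<in> F. k i < j}) = sum b {i \<in> F. k i < j}"
    using inj_on_subset[OF inj_on_k] y_k by (subst sum.reindex) auto
  also have "\<dots> = bsum (count j)"
    unfolding bsum_def below_eq[symmetric] by (rule sum.cong) auto
  finally show ?thesis .
qed

lemma mono_count: "mono count"
proof (rule monoI)
  fix j j' :: nat
  assume "j \<le> j'"
  then have "{..<count j} \<subseteq> {..<count j'}"
    unfolding below_eq[symmetric] by auto
  then show "count j \<le> count j'"
    by simp
qed

lemma partial_sum_y_eq: "partial_sum y = bsum \<circ> count"
  by (simp add: fun_eq_iff partial_sum_y)

lemma quad_var_partial_sum_y_le:
  assumes "sorted c"
  shows "quad_var (partial_sum y) c \<le> (Jnorm x)\<^sup>2"
proof -
  have "sorted (map count c)"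
    using mono_count by (intro sorted_map_mono[OF assms]) (simp add: mono_on_def monoD)
  then show ?thesis
    using quad_var_bsum_le by (simp add: partial_sum_y_eq quad_var_map[symmetric])
qed

lemma y_in_Jspace: "y \<in> Jspace" and Jnorm_y_le: "Jnorm y \<le> Jnorm x"
proof -
  have "convergent (partial_sum y)"
    unfolding partial_sum_y_eq by (rule convergent_comp_mono[OF convergent_bsum mono_count])
  from Jnorm_le_if_quad_var_le[OF this quad_var_partial_sum_y_le zero_le_power2]
  show "y \<in> Jspace" "Jnorm y \<le> Jnorm x"
    using Jnorm_nonneg[of x] by simp_all
qed

lemma l2norm_y: "l2norm y = Jnorm x"
proof -
  have "((\<lambda>n. (y n)\<^sup>2) \<circ> k has_sum (Jnorm x)\<^sup>2) F"
    using b_sq_has_sum by (rule has_sum_cong[THEN iffD1, rotated]) (simp add: y_k)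
  then have "((\<lambda>n. (y n)\<^sup>2) has_sum (Jnorm x)\<^sup>2) (k ` F)"
    using has_sum_reindex[OF inj_on_k] by blast
  then have "((\<lambda>n. (y n)\<^sup>2) has_sum (Jnorm x)\<^sup>2) UNIV"
    by (rule has_sum_cong_neutral[THEN iffD1, rotated -1]) (auto simp: y_outside)
  then have "(\<lambda>n. (y n)\<^sup>2) sums (Jnorm x)\<^sup>2"
    by (rule has_sum_imp_sums)
  then have "(\<Sum>n. (y n)\<^sup>2) = (Jnorm x)\<^sup>2"
    by (rule sums_unique[symmetric])
  then show ?thesis
    unfolding l2norm_def using Jnorm_nonneg[of x] by simp
qed

end

lemma spread_seq_norming_family_extreme:
  assumes "x \<in> Jspace" "Jnorm x = 1" "norming_family x F \<I>" "strict_mono_on F k"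
  shows "seq_extreme_point (spread_seq F k (\<lambda>i. interval_sum x (\<I> i))) J_ball"
proof -
  interpret spreading x F \<I> k
    using assms by unfold_locales
  have "y = spread_seq F k (\<lambda>i. interval_sum x (\<I> i))"
    unfolding y_def b_def ..
  moreover have "y \<in> J_ball"
    using y_in_Jspace Jnorm_y_le assms(2) by (simp add: J_ball_def)
  ultimately show ?thesis
    using seq_extreme_point_if_l2norm_eq_1 l2norm_y assms(2) by metis
qed

theorem corollary3p17:
  fixes x :: "nat \<Rightarrow> real"
  assumes "x \<in> Jspace" and "Jnorm x = 1"
  shows "(seq_extreme_point x J_ball \<longrightarrow>
            (\<forall>I. is_interval_nat I \<longrightarrow> Jnorm (restrict_seq x I) = l2norm (restrict_seq x I)))
       \<and> (\<forall>F \<I> (k :: nat \<Rightarrow> nat). norming_family x F \<I> \<and> strict_mono_on F k \<longrightarrow>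
            seq_extreme_point (spread_seq F k (\<lambda>i. interval_sum x (\<I> i))) J_ball)"
  using Jnorm_restrict_eq_l2norm_if_extreme[OF assms] spread_seq_norming_family_extreme[OF assms]
  by blast

end
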